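(* Let $(\bar p,\bar x)$ be a competitive equilibrium of $\mathcal E^{N,\beta}$ with $\bar p\in\mathbb R^N_{++}$ and all $\bar x_{in}>0$, where each $u_{in}$ is twice differentiable with $u_{in}'>0$, $u_{in}''<0$ on $\mathbb R_{++}$. For every $u\in\mathbb R^N$, writing $v_n=u_n/\bar p_n$ ($n=1,\dots,N$), $$S(u):=\sum_{i\in I_N}\sum_{n=1}^N\frac{\bar r_{in}}{\bar p_n}\bigl(u_n-\bar p_n\Lambda_i(u)\bigr)^2=\frac12\sum_{m,n=1}^Nw_{mn}(v_m-v_n)^2,$$ where $w_{mn}=\sum_{i\in I_N}\bar r_i^0\bar m_{im}\bar m_{in}=\sum_{i\in I_N}\frac{(\bar p_m\bar r_{im})(\bar p_n\bar r_{in})}{\bar r_i^0}$.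
   Context: For $N\ge1$, $\beta\in(0,1)$, the economy $\mathcal E^{N,\beta}$ has finite agent set $I_N$, commodities $0,\dots,N$, utilities $U_i(x_i)=\sum_{n=0}^N\beta^nu_{in}(x_{in})$, endowments in $\mathbb R_+^{N+1}$; price of commodity 0 is 1 and $p=(p_1,\dots,p_N)$; each agent maximizes $U_i$ subject to the budget constraint valued at $p$; an equilibrium $(\bar p,\bar x)$ has each $\bar x_i$ optimal at $\bar p$ and markets clearing. Equilibrium quantities: $\bar r_{in}=u_{in}'(\bar x_{in})/(-u_{in}''(\bar x_{in}))$, $\bar r_i^0=\sum_{n=1}^N\bar p_n\bar r_{in}$, $\bar m_{in}=\bar p_n\bar r_{in}/\bar r_i^0$, $\Lambda_i(q)=\sum_{n=1}^N\bar r_{in}q_n/\bar r_i^0$. *)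

theory Defs
  imports "HOL-Analysis.Analysis"
begin

text \<open>Economy E^{N,beta}: agents I (finite), commodities 0..N, utility functions
  u i n : real => real, endowments e i n. Prices: commodity 0 has price 1,
  p n for n = 1..N (the value p 0 is ignored).\<close>

definition total_utility :: "nat \<Rightarrow> real \<Rightarrow> ('a \<Rightarrow> nat \<Rightarrow> real \<Rightarrow> real) \<Rightarrow> 'a \<Rightarrow> (nat \<Rightarrow> real) \<Rightarrow> real" where
  "total_utility N \<beta> u i y = (\<Sum>n=0..N. \<beta> ^ n * u i n (y n))"

definition value_at :: "nat \<Rightarrow> (nat \<Rightarrow> real) \<Rightarrow> (nat \<Rightarrow> real) \<Rightarrow> real" where
  "value_at N p y = y 0 + (\<Sum>n=1..N. p n * y n)"

definition budget_set :: "nat \<Rightarrow> (nat \<Rightarrow> real) \<Rightarrow> (nat \<Rightarrow> real) \<Rightarrow> (nat \<Rightarrow> real) set" where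
  "budget_set N p w = {y. (\<forall>n\<in>{0..N}. 0 \<le> y n) \<and> value_at N p y \<le> value_at N p w}"

definition optimal_at :: "nat \<Rightarrow> real \<Rightarrow> ('a \<Rightarrow> nat \<Rightarrow> real \<Rightarrow> real) \<Rightarrow> ('a \<Rightarrow> nat \<Rightarrow> real)
    \<Rightarrow> (nat \<Rightarrow> real) \<Rightarrow> 'a \<Rightarrow> (nat \<Rightarrow> real) \<Rightarrow> bool" where
  "optimal_at N \<beta> u e p i y \<longleftrightarrow> y \<in> budget_set N p (e i) \<and>
     (\<forall>z\<in>budget_set N p (e i). total_utility N \<beta> u i z \<le> total_utility N \<beta> u i y)"

definition competitive_equilibrium :: "'a set \<Rightarrow> nat \<Rightarrow> real \<Rightarrow> ('a \<Rightarrow> nat \<Rightarrow> real \<Rightarrow> real)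
    \<Rightarrow> ('a \<Rightarrow> nat \<Rightarrow> real) \<Rightarrow> (nat \<Rightarrow> real) \<Rightarrow> ('a \<Rightarrow> nat \<Rightarrow> real) \<Rightarrow> bool" where
  "competitive_equilibrium I N \<beta> u e p x \<longleftrightarrow>
     (\<forall>i\<in>I. optimal_at N \<beta> u e p i (x i)) \<and>
     (\<forall>n\<in>{0..N}. (\<Sum>i\<in>I. x i n) = (\<Sum>i\<in>I. e i n))"

definition r_bar :: "('a \<Rightarrow> nat \<Rightarrow> real \<Rightarrow> real) \<Rightarrow> ('a \<Rightarrow> nat \<Rightarrow> real) \<Rightarrow> 'a \<Rightarrow> nat \<Rightarrow> real" where
  "r_bar u x i n = deriv (u i n) (x i n) / (- deriv (deriv (u i n)) (x i n))"

definition r0_bar :: "nat \<Rightarrow> ('a \<Rightarrow> nat \<Rightarrow> real \<Rightarrow> real) \<Rightarrow> ('a \<Rightarrow> nat \<Rightarrow> real) \<Rightarrow> (nat \<Rightarrow> real) \<Rightarrow> 'a \<Rightarrow> real" where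
  "r0_bar N u x p i = (\<Sum>n=1..N. p n * r_bar u x i n)"

definition m_bar :: "nat \<Rightarrow> ('a \<Rightarrow> nat \<Rightarrow> real \<Rightarrow> real) \<Rightarrow> ('a \<Rightarrow> nat \<Rightarrow> real) \<Rightarrow> (nat \<Rightarrow> real) \<Rightarrow> 'a \<Rightarrow> nat \<Rightarrow> real" where
  "m_bar N u x p i n = p n * r_bar u x i n / r0_bar N u x p i"

definition Lambda :: "nat \<Rightarrow> ('a \<Rightarrow> nat \<Rightarrow> real \<Rightarrow> real) \<Rightarrow> ('a \<Rightarrow> nat \<Rightarrow> real) \<Rightarrow> (nat \<Rightarrow> real) \<Rightarrow> 'a \<Rightarrow> (nat \<Rightarrow> real) \<Rightarrow> real" where
  "Lambda N u x p i q = (\<Sum>n=1..N. r_bar u x i n * q n) / r0_bar N u x p i"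

end

theory Submission
  imports Defs
begin

text \<open>For a single agent i, \<open>\<Lambda>\<^sub>i(u)\<close> is the mean of \<open>v\<^sub>n = u\<^sub>n / p\<^sub>n\<close> with respect to the
  weights \<open>p\<^sub>n r\<^sub>i\<^sub>n\<close>, whose total is \<open>r\<^sub>i\<^sup>0\<close>, and the i-th summand of S(u) is the corresponding
  weighted variance.  A weighted variance equals half the weighted mean of the squared pairwise
  differences, which here gives the coefficients \<open>(p\<^sub>m r\<^sub>i\<^sub>m)(p\<^sub>n r\<^sub>i\<^sub>n)/r\<^sub>i\<^sup>0 = r\<^sub>i\<^sup>0 m\<^sub>i\<^sub>m m\<^sub>i\<^sub>n\<close>;
  summing over the agents yields \<open>w\<^sub>m\<^sub>n\<close>.  The argument is pure algebra and needs nothing of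
  the equilibrium except positivity of prices and of the \<open>r\<^sub>i\<^sub>n\<close>.\<close>

lemma sum_pairwise_sq_diff:
  fixes w v :: "'b \<Rightarrow> real"
  shows "(\<Sum>m\<in>A. \<Sum>n\<in>A. w m * w n * (v m - v n)\<^sup>2)
     = 2 * sum w A * (\<Sum>n\<in>A. w n * (v n)\<^sup>2) - 2 * (\<Sum>n\<in>A. w n * v n)\<^sup>2"
proof -
  define a where "a n = w n * (v n)\<^sup>2" for n
  define b where "b n = w n * v n" for n
  have "(\<Sum>m\<in>A. \<Sum>n\<in>A. w m * w n * (v m - v n)\<^sup>2)
      = (\<Sum>m\<in>A. \<Sum>n\<in>A. a m * w n + w m * a n - 2 * (b m * b n))"
    by (intro sum.cong refl) (simp add: a_def b_def power2_eq_square algebra_simps)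
  also have "\<dots> = (\<Sum>m\<in>A. \<Sum>n\<in>A. a m * w n) + (\<Sum>m\<in>A. \<Sum>n\<in>A. w m * a n)
                 - 2 * (\<Sum>m\<in>A. \<Sum>n\<in>A. b m * b n)"
    by (simp add: sum.distrib sum_subtractf sum_distrib_left)
  also have "\<dots> = sum a A * sum w A + sum w A * sum a A - 2 * (sum b A * sum b A)"
    by (simp add: sum_product)
  finally show ?thesis
    by (simp add: a_def b_def power2_eq_square)
qed

lemma weighted_variance_eq_half_pairwise:
  fixes w v :: "'b \<Rightarrow> real"
  assumes "sum w A \<noteq> 0"
  shows "(\<Sum>n\<in>A. w n * (v n - (\<Sum>k\<in>A. w k * v k) / sum w A)\<^sup>2)
     = 1/2 * (\<Sum>m\<in>A. \<Sum>n\<in>A. w m * w n / sum w A * (v m - v n)\<^sup>2)"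
proof -
  define W where "W = sum w A"
  define S where "S = (\<Sum>k\<in>A. w k * v k)"
  define T where "T = (\<Sum>k\<in>A. w k * (v k)\<^sup>2)"
  have "(\<Sum>n\<in>A. w n * (v n - S / W)\<^sup>2)
      = (\<Sum>n\<in>A. w n * (v n)\<^sup>2 - 2 * (S / W) * (w n * v n) + (S / W)\<^sup>2 * w n)"
    by (intro sum.cong refl) (simp add: power2_eq_square algebra_simps)
  also have "\<dots> = T - 2 * (S / W) * S + (S / W)\<^sup>2 * W"
    by (simp add: sum.distrib sum_subtractf sum_distrib_left T_def S_def W_def)
  also have "\<dots> = 1/2 * ((2 * W * T - 2 * S\<^sup>2) / W)"
    using assms by (simp add: W_def field_simps power2_eq_square)
  also have "\<dots> = 1/2 * ((\<Sum>m\<in>A. \<Sum>n\<in>A. w m * w n * (v m - v n)\<^sup>2) / W)"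
    by (simp add: sum_pairwise_sq_diff W_def S_def T_def)
  also have "\<dots> = 1/2 * (\<Sum>m\<in>A. \<Sum>n\<in>A. w m * w n / W * (v m - v n)\<^sup>2)"
    by (simp add: sum_divide_distrib)
  finally show ?thesis
    by (simp only: W_def S_def)
qed

lemma r_bar_pos:
  assumes "deriv (u i n) (x i n) > 0" and "deriv (deriv (u i n)) (x i n) < 0"
  shows "r_bar u x i n > 0"
  using assms unfolding r_bar_def by (simp add: divide_pos_neg)

lemma r0_bar_pos:
  assumes "N \<ge> 1" and "\<And>n. n \<in> {1..N} \<Longrightarrow> p n > 0 \<and> r_bar u x i n > 0"
  shows "r0_bar N u x p i > 0"
  unfolding r0_bar_def using assms by (intro sum_pos) auto

lemma r0_bar_mult_m_bar_mult_m_bar: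
  assumes "r0_bar N u x p i \<noteq> 0"
  shows "r0_bar N u x p i * m_bar N u x p i m * m_bar N u x p i n
       = (p m * r_bar u x i m) * (p n * r_bar u x i n) / r0_bar N u x p i"
  using assms unfolding m_bar_def by (simp add: field_simps power2_eq_square)

lemma Lambda_eq_weighted_mean:
  assumes "\<And>n. n \<in> {1..N} \<Longrightarrow> p n \<noteq> 0"
  shows "Lambda N u x p i q
       = (\<Sum>n=1..N. (p n * r_bar u x i n) * (q n / p n)) / (\<Sum>n=1..N. p n * r_bar u x i n)"
  unfolding Lambda_def r0_bar_def using assms by (intro arg_cong2[where f = "(/)"] sum.cong) auto

lemma agent_deviation_eq_pairwise:
  assumes "\<And>n. n \<in> {1..N} \<Longrightarrow> p n \<noteq> 0" and "r0_bar N u x p i \<noteq> 0"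
  shows "(\<Sum>n=1..N. r_bar u x i n / p n * (q n - p n * Lambda N u x p i q)\<^sup>2)
       = 1/2 * (\<Sum>m=1..N. \<Sum>n=1..N. r0_bar N u x p i * m_bar N u x p i m * m_bar N u x p i n
                  * (q m / p m - q n / p n)\<^sup>2)"
proof -
  define w where "w n = p n * r_bar u x i n" for n
  define v where "v n = q n / p n" for n
  have total: "sum w {1..N} = r0_bar N u x p i"
    unfolding w_def r0_bar_def ..
  have mean: "Lambda N u x p i q = (\<Sum>k=1..N. w k * v k) / sum w {1..N}"
    unfolding w_def v_def using Lambda_eq_weighted_mean[OF assms(1)] .
  have "(\<Sum>n=1..N. r_bar u x i n / p n * (q n - p n * Lambda N u x p i q)\<^sup>2)
      = (\<Sum>n=1..N. w n * (v n - (\<Sum>k=1..N. w k * v k) / sum w {1..N})\<^sup>2)"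
    unfolding mean[symmetric]
  proof (intro sum.cong refl)
    fix n assume "n \<in> {1..N}"
    then have "p n \<noteq> 0" using assms(1) by blast
    then have "q n - p n * Lambda N u x p i q = p n * (v n - Lambda N u x p i q)"
      unfolding v_def by (simp add: field_simps)
    with \<open>p n \<noteq> 0\<close> show "r_bar u x i n / p n * (q n - p n * Lambda N u x p i q)\<^sup>2
        = w n * (v n - Lambda N u x p i q)\<^sup>2"
      unfolding w_def by (simp add: power_mult_distrib power2_eq_square)
  qed
  also have "\<dots> = 1/2 * (\<Sum>m=1..N. \<Sum>n=1..N. w m * w n / sum w {1..N} * (v m - v n)\<^sup>2)"
    using assms(2) total by (intro weighted_variance_eq_half_pairwise) simp
  also have "\<dots> = 1/2 * (\<Sum>m=1..N. \<Sum>n=1..N. r0_bar N u x p i * m_bar N u x p i m * m_bar N u x p i n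
                  * (q m / p m - q n / p n)\<^sup>2)"
    unfolding total r0_bar_mult_m_bar_mult_m_bar[OF assms(2)] w_def v_def ..
  finally show ?thesis .
qed

lemma sum_swap_outer_double:
  "(\<Sum>i\<in>I. \<Sum>m\<in>A. \<Sum>n\<in>B. f i m n) = (\<Sum>m\<in>A. \<Sum>n\<in>B. \<Sum>i\<in>I. f i m n)"
proof -
  have "(\<Sum>i\<in>I. \<Sum>m\<in>A. \<Sum>n\<in>B. f i m n) = (\<Sum>m\<in>A. \<Sum>i\<in>I. \<Sum>n\<in>B. f i m n)"
    by (rule sum.swap)
  also have "\<dots> = (\<Sum>m\<in>A. \<Sum>n\<in>B. \<Sum>i\<in>I. f i m n)"
    by (intro sum.cong refl sum.swap)
  finally show ?thesis .
qed

theorem lemma6: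
  fixes I :: "'a set" and N :: nat and \<beta> :: real
    and u :: "'a \<Rightarrow> nat \<Rightarrow> real \<Rightarrow> real" and e x :: "'a \<Rightarrow> nat \<Rightarrow> real"
    and p q :: "nat \<Rightarrow> real"
  assumes "finite I" and "N \<ge> 1" and "0 < \<beta>" and "\<beta> < 1"
    and "\<forall>i\<in>I. \<forall>n\<in>{0..N}. 0 \<le> e i n"
    and "\<forall>i\<in>I. \<forall>n\<in>{0..N}. \<forall>t>0. u i n differentiable (at t) \<and> deriv (u i n) differentiable (at t)
           \<and> deriv (u i n) t > 0 \<and> deriv (deriv (u i n)) t < 0"
    and "competitive_equilibrium I N \<beta> u e p x"
    and "\<forall>n\<in>{1..N}. p n > 0"
    and "\<forall>i\<in>I. \<forall>n\<in>{0..N}. x i n > 0"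
  shows "(\<forall>m\<in>{1..N}. \<forall>n\<in>{1..N}.
            (\<Sum>i\<in>I. r0_bar N u x p i * m_bar N u x p i m * m_bar N u x p i n)
          = (\<Sum>i\<in>I. (p m * r_bar u x i m) * (p n * r_bar u x i n) / r0_bar N u x p i))
       \<and> (\<Sum>i\<in>I. \<Sum>n=1..N. r_bar u x i n / p n * (q n - p n * Lambda N u x p i q)^2)
         = 1/2 * (\<Sum>m=1..N. \<Sum>n=1..N.
              (\<Sum>i\<in>I. r0_bar N u x p i * m_bar N u x p i m * m_bar N u x p i n)
              * (q m / p m - q n / p n)^2)"
proof -
  have p_nonzero: "p n \<noteq> 0" if "n \<in> {1..N}" for n
    using assms(8) that by fastforce
  have r0_nonzero: "r0_bar N u x p i \<noteq> 0" if "i \<in> I" for i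
  proof -
    have "r_bar u x i n > 0" if "n \<in> {1..N}" for n
      using assms(6,9) \<open>i \<in> I\<close> that by (intro r_bar_pos) auto
    then show ?thesis
      using r0_bar_pos[OF assms(2)] assms(8) by (metis less_irrefl)
  qed
  have weights: "\<forall>m\<in>{1..N}. \<forall>n\<in>{1..N}.
            (\<Sum>i\<in>I. r0_bar N u x p i * m_bar N u x p i m * m_bar N u x p i n)
          = (\<Sum>i\<in>I. (p m * r_bar u x i m) * (p n * r_bar u x i n) / r0_bar N u x p i)"
    using r0_nonzero by (simp add: r0_bar_mult_m_bar_mult_m_bar)
  have "(\<Sum>i\<in>I. \<Sum>n=1..N. r_bar u x i n / p n * (q n - p n * Lambda N u x p i q)\<^sup>2)
      = (\<Sum>i\<in>I. 1/2 * (\<Sum>m=1..N. \<Sum>n=1..N. r0_bar N u x p i * m_bar N u x p i m * m_bar N u x p i n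
                  * (q m / p m - q n / p n)\<^sup>2))"
    using p_nonzero r0_nonzero by (intro sum.cong refl agent_deviation_eq_pairwise)
  also have "\<dots> = 1/2 * (\<Sum>m=1..N. \<Sum>n=1..N.
              (\<Sum>i\<in>I. r0_bar N u x p i * m_bar N u x p i m * m_bar N u x p i n)
              * (q m / p m - q n / p n)\<^sup>2)"
    unfolding sum_distrib_left sum_distrib_right by (rule sum_swap_outer_double)
  finally show ?thesis
    using weights by simp
qed

end
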